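(* $hf(\mathcal{B})=\{v\}$.
   Context: A point $x$ of a space $X$ is homotopically fixed in $X$ if $h_t(x)=x$ for all $t$ for every homotopy $h_t:X\to X$ with $h_0=\mathrm{id}_X$; $hf(X)$ denotes the set of homotopically fixed points of $X$. The double broom $\mathcal{B}\subset\mathbb{R}^2$: let $v=(0,0)$, $a_0=(0,1)$, $b_0=(0,-1)$, $a_n=(1/n,0)$, $b_n=(-1/n,0)$ for $n\ge1$; let $J_{a_0}=[v,a_0]$, $J_{b_0}=[v,b_0]$, $J_{a_n}=[a_n,a_0]$, $J_{b_n}=[b_n,b_0]$ (straight segments), $A=J_{a_0}\cup\bigcup_{n\ge1}J_{a_n}$, $B=J_{b_0}\cup\bigcup_{n\ge1}J_{b_n}$, and $\mathcal{B}=A\cup B$. *)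

theory Defs
  imports "HOL-Analysis.Analysis"
begin

definition hf :: "'a::topological_space set \<Rightarrow> 'a set" where
  "hf X = {x \<in> X. \<forall>h :: real \<times> 'a \<Rightarrow> 'a.
      continuous_on ({0..1} \<times> X) h \<and> h ` ({0..1} \<times> X) \<subseteq> X \<and> (\<forall>y\<in>X. h (0, y) = y)
      \<longrightarrow> (\<forall>t\<in>{0..1}. h (t, x) = x)}"

definition bv :: "real \<times> real" where "bv = (0, 0)"
definition ba :: "nat \<Rightarrow> real \<times> real" where
  "ba n = (if n = 0 then (0, 1) else (1 / real n, 0))"
definition bb :: "nat \<Rightarrow> real \<times> real" where
  "bb n = (if n = 0 then (0, -1) else (- 1 / real n, 0))"

definition broomA :: "(real \<times> real) set" where
  "broomA = closed_segment bv (ba 0) \<union> (\<Union>n\<in>{1..}. closed_segment (ba n) (ba 0))"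
definition broomB :: "(real \<times> real) set" where
  "broomB = closed_segment bv (bb 0) \<union> (\<Union>n\<in>{1..}. closed_segment (bb n) (bb 0))"
definition double_broom :: "(real \<times> real) set" where
  "double_broom = broomA \<union> broomB"

end

theory Submission
  imports Defs
begin

(* The double broom X is the union of the upper broom A and its mirror image B = -A,
   two closed pieces meeting only in v.

   Points other than v are not fixed: a homotopy of A fixing v extends by the identity
   on B to a homotopy of X (pasting lemma). Two explicit homotopies of the cone A (one
   sliding towards the apex a0, one lowering a0 along the handle) move every point of
   A except v; points of B are handled by the symmetry p \<mapsto> -p.

   The vertex is fixed: as long as a homotopy h keeps v near v, the path t \<mapsto> h(t, a_n)
   is trapped on the n-th bristle of A for n large (the slope of a point is a continuous
   invariant taking isolated values on the bristles), and h(t, a_n) \<longrightarrow> h(t, v) uniformly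
   in t. So h(t, v) lies in the first quadrant, and symmetrically in the third, hence
   equals v. A continuity argument along [0,1] removes the "near v" proviso. *)

definition homotopy_from_id :: "'a::topological_space set \<Rightarrow> (real \<times> 'a \<Rightarrow> 'a) \<Rightarrow> bool" where
  "homotopy_from_id X h \<longleftrightarrow>
     continuous_on ({0..1} \<times> X) h \<and> h ` ({0..1} \<times> X) \<subseteq> X \<and> (\<forall>y\<in>X. h (0, y) = y)"

lemma hf_iff_fixed_by_homotopies:
  "x \<in> hf X \<longleftrightarrow> x \<in> X \<and> (\<forall>h. homotopy_from_id X h \<longrightarrow> (\<forall>t\<in>{0..1}. h (t, x) = x))"
  unfolding hf_def homotopy_from_id_def by blast

lemma homotopy_from_id_conjugate:
  fixes \<phi> :: "'a::topological_space \<Rightarrow> 'a"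
  assumes \<phi>: "continuous_on X \<phi>" "\<phi> ` X \<subseteq> X" "\<forall>x\<in>X. \<phi> (\<phi> x) = x"
    and h: "homotopy_from_id X h"
  shows "homotopy_from_id X (\<lambda>q. \<phi> (h (fst q, \<phi> (snd q))))"
proof -
  let ?D = "{0..1::real} \<times> X"
  have into: "(\<lambda>q. (fst q, \<phi> (snd q))) ` ?D \<subseteq> ?D" and h_into: "h ` ?D \<subseteq> X"
    using \<phi>(2) h unfolding homotopy_from_id_def by auto
  have "continuous_on ?D (\<lambda>q. (fst q, \<phi> (snd q)))"
    by (intro continuous_on_Pair continuous_on_fst continuous_on_id
        continuous_on_compose2[OF \<phi>(1) continuous_on_snd[OF continuous_on_id]]) auto
  then have "continuous_on ?D (\<lambda>q. h (fst q, \<phi> (snd q)))"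
    using h into unfolding homotopy_from_id_def by (auto intro: continuous_on_compose2[of ?D h])
  moreover have img: "(\<lambda>q. h (fst q, \<phi> (snd q))) ` ?D \<subseteq> X"
    using into h_into by fastforce
  ultimately have "continuous_on ?D (\<lambda>q. \<phi> (h (fst q, \<phi> (snd q))))"
    by (rule continuous_on_compose2[OF \<phi>(1)])
  then show ?thesis
    using h \<phi> img unfolding homotopy_from_id_def by (auto simp: image_subset_iff)
qed

lemma hf_involution_image:
  fixes \<phi> :: "'a::topological_space \<Rightarrow> 'a"
  assumes \<phi>: "continuous_on X \<phi>" "\<phi> ` X \<subseteq> X" "\<forall>x\<in>X. \<phi> (\<phi> x) = x"
    and x: "x \<in> hf X"
  shows "\<phi> x \<in> hf X"
  unfolding hf_iff_fixed_by_homotopies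
proof (intro conjI allI impI ballI)
  have xX: "x \<in> X" using x hf_iff_fixed_by_homotopies by blast
  then show "\<phi> x \<in> X" using \<phi>(2) by blast
  fix h t assume h: "homotopy_from_id X h" and t: "t \<in> {0..1::real}"
  have "\<phi> (h (t, \<phi> x)) = x"
    using x t homotopy_from_id_conjugate[OF \<phi> h] unfolding hf_iff_fixed_by_homotopies by fastforce
  moreover have "h (t, \<phi> x) \<in> X"
    using h t \<phi>(2) xX unfolding homotopy_from_id_def by blast
  ultimately show "h (t, \<phi> x) = \<phi> x" using \<phi>(3) by metis
qed

lemma homotopy_from_id_paste:
  fixes H :: "real \<times> 'a::topological_space \<Rightarrow> 'a"
  assumes A: "closedin (top_of_set X) A" and C: "closedin (top_of_set X) C" and X: "X = A \<union> C"
    and H: "homotopy_from_id A H" and fix_AC: "\<forall>t\<in>{0..1}. \<forall>p\<in>A \<inter> C. H (t, p) = p"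
  shows "homotopy_from_id X (\<lambda>q. if snd q \<in> A then H q else snd q)"
proof -
  let ?A = "{0..1::real} \<times> A" and ?C = "{0..1::real} \<times> C"
  have D: "{0..1} \<times> X = ?A \<union> ?C" using X by auto
  have "continuous_on (?A \<union> ?C) (\<lambda>q. if snd q \<in> A then H q else snd q)"
  proof (rule continuous_on_cases_local)
    show "closedin (top_of_set (?A \<union> ?C)) ?A" "closedin (top_of_set (?A \<union> ?C)) ?C"
      unfolding D[symmetric] using closedin_self closedin_Times A C by blast+
    show "continuous_on ?A H" using H unfolding homotopy_from_id_def by blast
    show "continuous_on ?C snd" by (rule continuous_on_snd[OF continuous_on_id])
    show "H q = snd q" if "q \<in> ?A \<and> snd q \<notin> A \<or> q \<in> ?C \<and> snd q \<in> A" for q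
      using that fix_AC by (cases q) auto
  qed
  then show ?thesis
    using H D unfolding homotopy_from_id_def X by (auto simp: image_subset_iff)
qed

lemma not_hf_if_moved_on_closed_piece:
  fixes H :: "real \<times> 'a::topological_space \<Rightarrow> 'a"
  assumes "closedin (top_of_set X) A" "closedin (top_of_set X) C" "X = A \<union> C"
    and "homotopy_from_id A H" "\<forall>t\<in>{0..1}. \<forall>p\<in>A \<inter> C. H (t, p) = p"
    and x: "x \<in> A" and t: "t \<in> {0..1}" and moved: "H (t, x) \<noteq> x"
  shows "x \<notin> hf X"
  using homotopy_from_id_paste[OF assms(1-5)] x t moved
  unfolding hf_iff_fixed_by_homotopies by fastforce

lemma bv_eq_0: "bv = 0"
  by (simp add: bv_def zero_prod_def)

(* A point of the upper broom A lies on the segment from (r,0) to a0 = (0,1), where r is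
   0 (the handle) or 1/n (the n-th bristle); these r are the "slopes" of A. *)
definition broom_slopes :: "real set" where
  "broom_slopes = insert 0 ((\<lambda>n. 1 / real n) ` {1..})"

lemma broom_slopes_bounds: "r \<in> broom_slopes \<Longrightarrow> 0 \<le> r \<and> r \<le> 1"
  by (auto simp: broom_slopes_def)

lemma in_closed_segment_iff:
  "p \<in> closed_segment a b \<longleftrightarrow> (\<exists>u. 0 \<le> u \<and> u \<le> 1 \<and> p = (1 - u) *\<^sub>R a + u *\<^sub>R b)"
  by (auto simp: closed_segment_def)

lemma broomA_iff:
  "p \<in> broomA \<longleftrightarrow> (\<exists>r\<in>broom_slopes. 0 \<le> snd p \<and> snd p \<le> 1 \<and> fst p = r * (1 - snd p))"
proof
  assume "p \<in> broomA"
  then obtain r where r: "r \<in> broom_slopes" "p \<in> closed_segment (r, 0) (ba 0)"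
    unfolding broomA_def broom_slopes_def by (auto simp: bv_def ba_def)
  then obtain u where "0 \<le> u" "u \<le> 1" "p = (1 - u) *\<^sub>R (r, 0) + u *\<^sub>R ba 0"
    by (auto simp: in_closed_segment_iff)
  then show "\<exists>r\<in>broom_slopes. 0 \<le> snd p \<and> snd p \<le> 1 \<and> fst p = r * (1 - snd p)"
    using r(1) by (auto simp: ba_def)
next
  assume "\<exists>r\<in>broom_slopes. 0 \<le> snd p \<and> snd p \<le> 1 \<and> fst p = r * (1 - snd p)"
  then obtain r where r: "r \<in> broom_slopes" "0 \<le> snd p" "snd p \<le> 1" "fst p = r * (1 - snd p)"
    by blast
  then have "p \<in> closed_segment (r, 0) (ba 0)"
    unfolding in_closed_segment_iff by (intro exI[of _ "snd p"]) (auto simp: ba_def prod_eq_iff)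
  then show "p \<in> broomA"
    using r(1) unfolding broomA_def broom_slopes_def by (auto simp: bv_def ba_def)
qed

lemma broomB_eq_uminus: "broomB = uminus ` broomA"
proof -
  have "broomB = closed_segment (- bv) (- ba 0) \<union> (\<Union>n\<in>{1..}. closed_segment (- ba n) (- ba 0))"
    by (simp add: broomB_def ba_def bb_def bv_def)
  moreover have "closed_segment (- a) (- b) = uminus ` closed_segment a b" for a b :: "real \<times> real"
    using closed_segment_linear_image[OF linear_uminus] by simp
  ultimately show ?thesis
    unfolding broomA_def image_Un image_UN by simp
qed

lemma in_broomB_iff: "p \<in> broomB \<longleftrightarrow> - p \<in> broomA"
  unfolding broomB_eq_uminus by (auto intro: image_eqI[of p uminus "- p"])

lemma uminus_in_double_broom: "- p \<in> double_broom \<longleftrightarrow> p \<in> double_broom"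
  unfolding double_broom_def using in_broomB_iff[of p] in_broomB_iff[of "- p"] by auto

definition first_quadrant :: "(real \<times> real) set" where
  "first_quadrant = {p. 0 \<le> fst p \<and> 0 \<le> snd p}"

lemma closed_first_quadrant: "closed first_quadrant"
  unfolding first_quadrant_def by (intro closed_Collect_conj closed_Collect_le continuous_intros)

lemma first_quadrant_antipodal: "p \<in> first_quadrant \<Longrightarrow> - p \<in> first_quadrant \<Longrightarrow> p = bv"
  by (auto simp: first_quadrant_def bv_def prod_eq_iff)

lemma bv_in_broomA: "bv \<in> broomA"
  unfolding broomA_def by auto

lemma bv_in_double_broom: "bv \<in> double_broom"
  using bv_in_broomA by (simp add: double_broom_def)

lemma broomA_eq: "broomA = double_broom \<inter> first_quadrant"
proof -
  have "broomA \<subseteq> first_quadrant"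
    using broom_slopes_bounds by (auto simp: broomA_iff first_quadrant_def)
  moreover have "p \<in> broomA" if "p \<in> broomB" "p \<in> first_quadrant" for p
  proof -
    have "- p \<in> broomA \<inter> first_quadrant"
      using that \<open>broomA \<subseteq> first_quadrant\<close> by (auto simp: broomB_eq_uminus)
    then show ?thesis using that first_quadrant_antipodal bv_in_broomA by (metis IntD2)
  qed
  ultimately show ?thesis unfolding double_broom_def by blast
qed

lemma broomB_eq: "broomB = double_broom \<inter> uminus ` first_quadrant"
proof -
  have "p \<in> broomB \<longleftrightarrow> p \<in> double_broom \<and> - p \<in> first_quadrant" for p
    using in_broomB_iff[of p] uminus_in_double_broom[of p] by (simp add: broomA_eq)
  then show ?thesis by (auto intro: image_eqI[of _ uminus "- _"])
qed

lemma broomA_inter_broomB: "broomA \<inter> broomB = {bv}"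
  using first_quadrant_antipodal bv_in_broomA in_broomB_iff[of bv]
  by (auto simp: in_broomB_iff broomA_eq bv_def)

lemma closedin_broomA: "closedin (top_of_set double_broom) broomA"
  unfolding broomA_eq by (intro closedin_closed_Int closed_first_quadrant)

lemma closedin_broomB: "closedin (top_of_set double_broom) broomB"
  unfolding broomB_eq by (intro closedin_closed_Int closed_negations closed_first_quadrant)

lemma broomA_cone:
  assumes p: "p \<in> broomA" and c: "0 \<le> c" "c \<le> 1"
  shows "c *\<^sub>R p + (1 - c) *\<^sub>R ba 0 \<in> broomA"
proof -
  obtain r where r: "r \<in> broom_slopes" "0 \<le> snd p" "snd p \<le> 1" "fst p = r * (1 - snd p)"
    using p unfolding broomA_iff by blast
  let ?q = "c *\<^sub>R p + (1 - c) *\<^sub>R ba 0"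
  have "snd ?q = 1 - c * (1 - snd p)" "fst ?q = r * (c * (1 - snd p))"
    by (simp_all add: ba_def r(4) algebra_simps)
  moreover have "c * (1 - snd p) \<le> 1" "0 \<le> c * (1 - snd p)"
    using r c by (auto intro: mult_le_one)
  ultimately show ?thesis
    unfolding broomA_iff using r(1) by (intro bexI[of _ r]) auto
qed

lemma broomA_sum_coordinates:
  assumes "p \<in> broomA" shows "0 \<le> fst p + snd p \<and> fst p + snd p \<le> 1"
proof -
  obtain r where r: "r \<in> broom_slopes" "0 \<le> snd p" "snd p \<le> 1" "fst p = r * (1 - snd p)"
    using assms unfolding broomA_iff by blast
  then have "0 \<le> fst p" "fst p \<le> 1 - snd p"
    using broom_slopes_bounds[OF r(1)] by (auto simp: mult_left_le_one_le)
  then show ?thesis using r by linarith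
qed

(* Slide every point of A towards the apex a0 by an amount proportional to its distance
   (in the l1 norm) from v; this fixes v and moves every point except v and a0. *)
definition slide_to_apex :: "real \<times> real \<times> real \<Rightarrow> real \<times> real" where
  "slide_to_apex q = (let c = 1 - fst q * (fst (snd q) + snd (snd q)) in c *\<^sub>R snd q + (1 - c) *\<^sub>R ba 0)"

(* Collapse A onto the handle towards a0 during the first half and then push a0 down the
   handle; this fixes v (where y = 0) and moves a0 to (0, 1/2). *)
definition lower_apex :: "real \<times> real \<times> real \<Rightarrow> real \<times> real" where
  "lower_apex q = (let f = 1 - 2 * fst q * snd (snd q)
     in max 0 f *\<^sub>R snd q + (1 - max 0 f + min 0 f / 2) *\<^sub>R ba 0)"

lemma homotopy_slide_to_apex: "homotopy_from_id broomA slide_to_apex"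
  unfolding homotopy_from_id_def
proof (intro conjI ballI image_subsetI)
  show "continuous_on ({0..1} \<times> broomA) slide_to_apex"
    unfolding slide_to_apex_def Let_def by (intro continuous_intros)
  fix q assume "q \<in> {0..1::real} \<times> broomA"
  then have "0 \<le> fst q" "fst q \<le> 1" "snd q \<in> broomA" by auto
  then show "slide_to_apex q \<in> broomA"
    using broomA_sum_coordinates[of "snd q"] unfolding slide_to_apex_def Let_def
    by (intro broomA_cone) (auto intro: mult_le_one)
qed (simp add: slide_to_apex_def)

lemma homotopy_lower_apex: "homotopy_from_id broomA lower_apex"
  unfolding homotopy_from_id_def
proof (intro conjI ballI image_subsetI)
  show "continuous_on ({0..1} \<times> broomA) lower_apex"
    unfolding lower_apex_def Let_def by (intro continuous_intros) auto
  fix q assume q: "q \<in> {0..1::real} \<times> broomA"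
  define f where "f = 1 - 2 * fst q * snd (snd q)"
  have f: "-1 \<le> f" "f \<le> 1"
    using q broomA_iff[of "snd q"] unfolding f_def by (auto intro: mult_le_one)
  show "lower_apex q \<in> broomA"
  proof (cases "0 \<le> f")
    case True
    have "snd q \<in> broomA" using q by auto
    then show ?thesis
      using broomA_cone[of "snd q" f] f True by (simp add: lower_apex_def f_def[symmetric] Let_def)
  next
    case False
    then have "lower_apex q = (- f / 2) *\<^sub>R bv + (1 - (- f / 2)) *\<^sub>R ba 0"
      by (simp add: lower_apex_def f_def[symmetric] Let_def bv_eq_0)
    then show ?thesis
      using broomA_cone[OF bv_in_broomA, of "- f / 2"] f False by simp
  qed
qed (simp add: lower_apex_def)

lemma broomA_point_not_hf:
  assumes x: "x \<in> broomA" "x \<noteq> bv"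
  shows "x \<notin> hf double_broom"
proof -
  note pieces = closedin_broomA closedin_broomB double_broom_def
  show ?thesis
  proof (cases "x = ba 0")
    case True
    show ?thesis
    proof (rule not_hf_if_moved_on_closed_piece[OF pieces homotopy_lower_apex _ x(1)])
      show "\<forall>t\<in>{0..1}. \<forall>p\<in>broomA \<inter> broomB. lower_apex (t, p) = p"
        by (simp add: broomA_inter_broomB lower_apex_def bv_def)
      show "lower_apex (1, x) \<noteq> x"
        using True by (simp add: lower_apex_def ba_def)
    qed simp
  next
    case False
    show ?thesis
    proof (rule not_hf_if_moved_on_closed_piece[OF pieces homotopy_slide_to_apex _ x(1)])
      show "\<forall>t\<in>{0..1}. \<forall>p\<in>broomA \<inter> broomB. slide_to_apex (t, p) = p"
        by (simp add: broomA_inter_broomB slide_to_apex_def bv_def)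
      have "x \<in> first_quadrant" using x(1) broomA_eq by blast
      then have "fst x + snd x \<noteq> 0"
        using x(2) by (auto simp: first_quadrant_def bv_def prod_eq_iff)
      moreover have "slide_to_apex (1, x) - x = (fst x + snd x) *\<^sub>R (ba 0 - x)"
        by (simp add: slide_to_apex_def algebra_simps)
      ultimately show "slide_to_apex (1, x) \<noteq> x"
        using False by auto
    qed simp
  qed
qed

(* If a_n \<longrightarrow> v, then h(t, a_n) \<longrightarrow> h(t, v) uniformly in t over a compact time set:
   uniform continuity on the compact set T \<times> ({v} \<union> range a). *)
lemma uniformly_close_along_convergent_sequence:
  fixes h :: "'c::metric_space \<times> 'a::heine_borel \<Rightarrow> 'b::metric_space"
  assumes h: "continuous_on (T \<times> X) h" and T: "compact T"
    and a: "a \<longlonglongrightarrow> v" "range a \<subseteq> X" "v \<in> X" and e: "0 < e"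
  shows "\<forall>\<^sub>F n in sequentially. \<forall>t\<in>T. dist (h (t, a n)) (h (t, v)) < e"
proof -
  let ?K = "T \<times> insert v (range a)"
  have "compact ?K" using T compact_sequence_with_limit[OF a(1)] by (rule compact_Times)
  moreover have "?K \<subseteq> T \<times> X" using a by auto
  ultimately have "uniformly_continuous_on ?K h"
    using h by (intro compact_uniformly_continuous) (auto intro: continuous_on_subset)
  then obtain d where d: "d > 0" "\<And>x x'. x \<in> ?K \<Longrightarrow> x' \<in> ?K \<Longrightarrow> dist x' x < d \<Longrightarrow> dist (h x') (h x) < e"
    unfolding uniformly_continuous_on_def using e by metis
  have "\<forall>\<^sub>F n in sequentially. dist (a n) v < d" using a(1) d(1) by (rule tendstoD)
  then show ?thesis
  proof (rule eventually_mono)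
    fix n assume n: "dist (a n) v < d"
    show "\<forall>t\<in>T. dist (h (t, a n)) (h (t, v)) < e"
    proof
      fix t assume "t \<in> T"
      moreover have "dist (t, a n) (t, v) < d" using n by (simp add: dist_Pair_Pair)
      ultimately show "dist (h (t, a n)) (h (t, v)) < e" using d(2) by simp
    qed
  qed
qed

lemma ba_tendsto_bv: "(\<lambda>n. ba (Suc n)) \<longlonglongrightarrow> bv"
proof -
  have "(\<lambda>n. (1 / real (Suc n), 0::real)) \<longlonglongrightarrow> (0, 0)"
    by (intro tendsto_Pair tendsto_const LIMSEQ_Suc[OF lim_1_over_n])
  then show ?thesis by (simp add: ba_def bv_def)
qed

lemma ba_in_double_broom: "n \<ge> 1 \<Longrightarrow> ba n \<in> double_broom"
  unfolding double_broom_def broomA_def by auto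

(* The slope of a point below the apex: r for the point (r(1-y), y) of A, and a
   non-positive number on B. It is continuous on the open strip |y| < 1. *)
definition bristle_slope :: "real \<times> real \<Rightarrow> real" where
  "bristle_slope p = fst p / (1 - \<bar>snd p\<bar>)"

lemma bristle_slope_cases:
  assumes p: "p \<in> double_broom" and below: "\<bar>snd p\<bar> < 1"
  shows "bristle_slope p \<le> 0 \<or> (p \<in> broomA \<and> bristle_slope p \<in> broom_slopes)"
proof (cases "p \<in> broomA")
  case True
  then obtain r where r: "r \<in> broom_slopes" "0 \<le> snd p" "fst p = r * (1 - snd p)"
    unfolding broomA_iff by blast
  then have "bristle_slope p = r" using below by (simp add: bristle_slope_def)
  then show ?thesis using True r(1) by simp
next
  case False
  then have "p \<in> uminus ` first_quadrant" using p broomB_eq unfolding double_broom_def by blast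
  then have "fst p \<le> 0" by (auto simp: first_quadrant_def)
  then show ?thesis using below by (simp add: bristle_slope_def divide_nonpos_pos)
qed

lemma first_quadrant_if_bristle_slope_pos:
  assumes "p \<in> double_broom" "\<bar>snd p\<bar> < 1" "0 < bristle_slope p"
  shows "p \<in> first_quadrant"
  using bristle_slope_cases[OF assms(1,2)] assms(3) broomA_eq by auto

lemma bristle_slope_isolated:
  assumes p: "p \<in> double_broom" "\<bar>snd p\<bar> < 1" and n: "n \<ge> 1"
    and window: "bristle_slope p \<in> {1 / real (n + 1) <..< 2 / (2 * real n - 1)}"
  shows "bristle_slope p = 1 / real n"
proof -
  have "0 < bristle_slope p"
    using window order_less_trans[of 0 "1 / real (n + 1)" "bristle_slope p"] by simp
  then obtain m where m: "m \<ge> 1" "bristle_slope p = 1 / real m"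
    using bristle_slope_cases[OF p] by (auto simp: broom_slopes_def)
  moreover have "1 / real (n + 1) < 1 / real m" "1 / real m < 2 / (2 * real n - 1)"
    using window m(2) by simp_all
  ultimately have "real m < real (n + 1)" "2 * real n - 1 < 2 * real m"
    using n by (simp_all add: field_simps)
  then have "m = n" by linarith
  then show ?thesis using m by simp
qed

(* A path in the double broom starting at a_n and staying in the strip |y| < 1 cannot
   leave the n-th bristle: its slope is continuous and takes values in a set in which 1/n
   is isolated, so by connectedness of the time interval it is constantly 1/n. *)
lemma path_stays_on_bristle:
  fixes \<gamma> :: "real \<Rightarrow> real \<times> real"
  assumes \<gamma>: "continuous_on {0..s} \<gamma>" "\<gamma> ` {0..s} \<subseteq> double_broom"
    and below: "\<forall>t\<in>{0..s}. \<bar>snd (\<gamma> t)\<bar> < 1"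
    and start: "\<gamma> 0 = ba n" and n: "n \<ge> 1" and s: "0 \<le> s"
  shows "\<forall>t\<in>{0..s}. bristle_slope (\<gamma> t) = 1 / real n"
proof -
  have cont: "continuous_on {0..s} (\<lambda>t. bristle_slope (\<gamma> t))"
    unfolding bristle_slope_def using below by (intro continuous_intros \<gamma>(1)) auto
  define I where "I = {1 / real (n + 1) <..< 2 / (2 * real n - 1)}"
  have "1 / real n \<in> I"
    using n by (simp add: I_def field_simps)
  moreover have "bristle_slope (\<gamma> t) \<in> I \<Longrightarrow> bristle_slope (\<gamma> t) = 1 / real n" if "t \<in> {0..s}" for t
    using bristle_slope_isolated[OF _ _ n, of "\<gamma> t"] \<gamma>(2) below that unfolding I_def by blast
  ultimately have "{t \<in> {0..s}. bristle_slope (\<gamma> t) = 1 / real n} = {0..s} \<inter> (\<lambda>t. bristle_slope (\<gamma> t)) -` I"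
    by auto
  moreover have "openin (top_of_set {0..s}) ({0..s} \<inter> (\<lambda>t. bristle_slope (\<gamma> t)) -` I)"
    using cont by (rule continuous_openin_preimage_gen) (simp add: I_def)
  ultimately have "openin (top_of_set {0..s}) {t \<in> {0..s}. bristle_slope (\<gamma> t) = 1 / real n}"
    by simp
  moreover have "bristle_slope (\<gamma> 0) = 1 / real n"
    using start n by (simp add: bristle_slope_def ba_def)
  moreover have "0 \<in> {0..s}" using s by simp
  ultimately show ?thesis
    using continuous_levelset_openin[OF connected_Icc cont] by blast
qed

lemma uminus_involution_double_broom:
  "continuous_on double_broom uminus" "uminus ` double_broom \<subseteq> double_broom"
  "\<forall>x\<in>double_broom. - (- x) = x"
  using uminus_in_double_broom by (auto intro: continuous_on_minus[OF continuous_on_id])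

lemma bristle_base_orbit_in_first_quadrant:
  assumes h: "homotopy_from_id double_broom h" and s: "s \<le> 1" and n: "n \<ge> 1"
    and below: "\<forall>t\<in>{0..s}. \<bar>snd (h (t, ba n))\<bar> < 1" and \<sigma>: "\<sigma> \<in> {0..s}"
  shows "h (\<sigma>, ba n) \<in> first_quadrant"
proof -
  let ?D = "{0..1::real} \<times> double_broom" and ?\<gamma> = "\<lambda>t. h (t, ba n)"
  have path_in: "(\<lambda>t. (t, ba n)) ` {0..s} \<subseteq> ?D" using s ba_in_double_broom[OF n] by auto
  then have in_broom: "?\<gamma> ` {0..s} \<subseteq> double_broom"
    using h unfolding homotopy_from_id_def by auto
  have cont: "continuous_on ?D h" using h unfolding homotopy_from_id_def by blast
  have "continuous_on {0..s} ?\<gamma>"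
    by (rule continuous_on_compose2[OF cont _ path_in]) (intro continuous_intros)
  moreover have "?\<gamma> 0 = ba n" using h ba_in_double_broom[OF n] unfolding homotopy_from_id_def by auto
  ultimately have "bristle_slope (?\<gamma> \<sigma>) = 1 / real n"
    using path_stays_on_bristle[OF _ in_broom below _ n] \<sigma> by auto
  then show ?thesis
    using first_quadrant_if_bristle_slope_pos[of "?\<gamma> \<sigma>"] in_broom below \<sigma> n
    by (simp add: image_subset_iff)
qed

(* Key step: if h keeps v within distance 1/2 of v up to time s, then for large n the
   orbit of a_n stays within distance 1 of v, hence in the first quadrant, up to time s;
   letting n \<longrightarrow> \<infinity>, h(\<sigma>, v) lies in the closed first quadrant for all \<sigma> \<le> s. *)
lemma vertex_image_in_first_quadrant:
  assumes h: "homotopy_from_id double_broom h" and s: "s \<le> 1"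
    and near: "\<forall>t\<in>{0..s}. dist (h (t, bv)) bv < 1/2" and \<sigma>: "\<sigma> \<in> {0..s}"
  shows "h (\<sigma>, bv) \<in> first_quadrant"
proof -
  let ?a = "\<lambda>n. ba (Suc n)"
  have cont: "continuous_on ({0..1} \<times> double_broom) h"
    using h unfolding homotopy_from_id_def by auto
  have a_in: "range ?a \<subseteq> double_broom"
    using ba_in_double_broom by (simp add: image_subset_iff)
  have "\<forall>\<^sub>F n in sequentially. \<forall>t\<in>{0..1}. dist (h (t, ?a n)) (h (t, bv)) < 1/2"
    by (rule uniformly_close_along_convergent_sequence[OF cont compact_Icc ba_tendsto_bv
          a_in bv_in_double_broom]) simp
  then have "\<forall>\<^sub>F n in sequentially. h (\<sigma>, ?a n) \<in> first_quadrant"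
  proof (rule eventually_mono)
    fix n assume close: "\<forall>t\<in>{0..1}. dist (h (t, ?a n)) (h (t, bv)) < 1/2"
    have "\<bar>snd (h (t, ?a n))\<bar> < 1" if t: "t \<in> {0..s}" for t
    proof -
      have "\<bar>snd (h (t, ?a n))\<bar> \<le> dist (h (t, ?a n)) bv"
        using dist_snd_le[of "h (t, ?a n)" bv] by (simp add: bv_def dist_real_def)
      also have "\<dots> \<le> dist (h (t, ?a n)) (h (t, bv)) + dist (h (t, bv)) bv" by (rule dist_triangle)
      also have "\<dots> < 1/2 + 1/2"
        using close near t s by (intro add_strict_mono) auto
      finally show ?thesis by simp
    qed
    then show "h (\<sigma>, ?a n) \<in> first_quadrant"
      using bristle_base_orbit_in_first_quadrant[OF h s _ _ \<sigma>] by simp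
  qed
  moreover have "(\<lambda>n. h (\<sigma>, ?a n)) \<longlonglongrightarrow> h (\<sigma>, bv)"
    using \<sigma> s a_in bv_in_double_broom
    by (intro continuous_on_tendsto_compose[OF cont] tendsto_Pair tendsto_const ba_tendsto_bv)
      (auto simp: image_subset_iff)
  ultimately show ?thesis
    by (intro Lim_in_closed_set[OF closed_first_quadrant]) simp_all
qed

(* Applying the key step also to the conjugate homotopy -h(t, -p), which uses the bristles
   of B, puts h(\<sigma>, v) into both the first and the third quadrant, i.e. h(\<sigma>, v) = v. *)
lemma vertex_fixed_while_near:
  assumes h: "homotopy_from_id double_broom h" and s: "s \<le> 1"
    and near: "\<forall>t\<in>{0..s}. dist (h (t, bv)) bv < 1/2" and \<sigma>: "\<sigma> \<in> {0..s}"
  shows "h (\<sigma>, bv) = bv"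
proof -
  let ?h' = "\<lambda>q. - h (fst q, - snd q)"
  have h': "homotopy_from_id double_broom ?h'"
    by (rule homotopy_from_id_conjugate[OF uminus_involution_double_broom h])
  have "?h' (t, bv) = - h (t, bv)" for t by (simp add: bv_eq_0)
  moreover have "dist (- p) bv = dist p bv" for p :: "real \<times> real"
    by (simp add: bv_eq_0 dist_norm)
  ultimately have near': "\<forall>t\<in>{0..s}. dist (?h' (t, bv)) bv < 1/2" using near by simp
  have "h (\<sigma>, bv) \<in> first_quadrant" "- h (\<sigma>, bv) \<in> first_quadrant"
    using vertex_image_in_first_quadrant[OF h s near \<sigma>]
      vertex_image_in_first_quadrant[OF h' s near' \<sigma>] by (simp_all add: bv_eq_0)
  then show ?thesis by (rule first_quadrant_antipodal)
qed

(* Bootstrapping along [0,1] in steps of half a modulus of uniform continuity of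
   t \<mapsto> h(t, v): at each step h(t, v) stays within 1/2 of v, so it stays equal to v. *)
lemma vertex_fixed_by_homotopies:
  assumes h: "homotopy_from_id double_broom h" and t: "t \<in> {0..1}"
  shows "h (t, bv) = bv"
proof -
  let ?g = "\<lambda>t. h (t, bv)"
  have cont: "continuous_on ({0..1} \<times> double_broom) h"
    using h unfolding homotopy_from_id_def by blast
  have path_in: "(\<lambda>t. (t, bv)) ` {0..1} \<subseteq> {0..1} \<times> double_broom" using bv_in_double_broom by auto
  have "continuous_on {0..1} ?g"
    by (rule continuous_on_compose2[OF cont _ path_in]) (intro continuous_intros)
  then have "uniformly_continuous_on {0..1} ?g" by (rule compact_uniformly_continuous) simp
  then have "\<exists>d>0. \<forall>t\<in>{0..1}. \<forall>t'\<in>{0..1}. dist t' t < d \<longrightarrow> dist (?g t') (?g t) < 1/2"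
    unfolding uniformly_continuous_on_def by (meson half_gt_zero zero_less_one)
  then obtain d where d: "d > 0"
    "\<And>t t'. t \<in> {0..1} \<Longrightarrow> t' \<in> {0..1} \<Longrightarrow> dist t' t < d \<Longrightarrow> dist (?g t') (?g t) < 1/2"
    by blast
  have fixed: "\<forall>\<sigma>\<in>{0..min 1 (real k * d / 2)}. ?g \<sigma> = bv" for k
  proof (induction k)
    case 0
    then show ?case using h bv_in_double_broom unfolding homotopy_from_id_def by simp
  next
    case (Suc k)
    let ?prev = "min 1 (real k * d / 2)" and ?next = "min 1 (real (Suc k) * d / 2)"
    have "dist (?g t) bv < 1/2" if t: "t \<in> {0..?next}" for t
    proof (cases "t \<le> ?prev")
      case True
      then have "?g t = bv" using Suc.IH t by (meson atLeastAtMost_iff)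
      then show ?thesis by simp
    next
      case False
      then have "dist t ?prev < d" "?prev \<in> {0..1}" "t \<in> {0..1}"
        using t d(1) by (auto simp: dist_real_def algebra_simps)
      moreover have "?g ?prev = bv" using Suc.IH d(1) by simp
      ultimately show ?thesis using d(2)[of ?prev t] by simp
    qed
    then show ?case
      using vertex_fixed_while_near[OF h, of ?next] by simp
  qed
  obtain k :: nat where "1 < real k * (d / 2)" using ex_less_of_nat_mult d(1) by (metis half_gt_zero)
  then have "min 1 (real k * d / 2) = 1" by simp
  then show ?thesis using fixed[of k] t by simp
qed

lemma bv_in_hf: "bv \<in> hf double_broom"
  unfolding hf_iff_fixed_by_homotopies
  using bv_in_double_broom vertex_fixed_by_homotopies by simp

theorem corollary3p3:
  shows "hf double_broom = {bv}"
proof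
  show "{bv} \<subseteq> hf double_broom" using bv_in_hf by simp
  show "hf double_broom \<subseteq> {bv}"
  proof
    fix x assume x: "x \<in> hf double_broom"
    have "- x \<in> hf double_broom"
      by (rule hf_involution_image[OF uminus_involution_double_broom x])
    moreover have "x \<in> broomA \<or> - x \<in> broomA"
      using x in_broomB_iff unfolding hf_iff_fixed_by_homotopies double_broom_def by blast
    moreover have "x \<noteq> bv \<Longrightarrow> - x \<noteq> bv" by (simp add: bv_eq_0)
    ultimately show "x \<in> {bv}"
      using x broomA_point_not_hf by blast
  qed
qed

end
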